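(* Let $A,B,C$, $L,\mu,\mu_x$, $\kappa$, $\kappa_x$ be as below, let $r\ge2\kappa$, $\eta_x=\frac{1}{4rL}$, $\eta_y=\frac{1}{4L}$ (so $r=\eta_y/\eta_x$), and $M=\begin{pmatrix}-C & -B\\ rB^\top & -rA\end{pmatrix}$. Let $\rho_1$ be the spectral radius of $I+\eta_xM$ and $\rho_2$ the spectral radius of $I+\eta_xM+\eta_x^2M^2$. Then $$\max\{\rho_1,\rho_2\}\le1-\frac{1}{64\,r\kappa_x}.$$
   Context: $A\in\mathbb{R}^{m\times m}$, $C\in\mathbb{R}^{n\times n}$ symmetric, $B\in\mathbb{R}^{n\times m}$, with $\mu I\preceq A\preceq LI$ ($0<\mu\le L$), $\|B\|_2\le L$, $\|C\|_2\le L$, and $C+BA^{-1}B^\top\succ0$. $\mu_x=\min\{L,\lambda_{\min}(C+BA^{-1}B^\top)\}$, $\kappa=L/\mu$, $\kappa_x=L/\mu_x$. The spectral radius is the largest modulus of a (complex) eigenvalue. *)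

theory Defs
  imports "HOL-Analysis.Analysis"
begin

definition loewner_le :: "real^'k^'k \<Rightarrow> real^'k^'k \<Rightarrow> bool" where
  "loewner_le X Y \<longleftrightarrow> (\<forall>x. x \<bullet> (X *v x) \<le> x \<bullet> (Y *v x))"

definition pos_def_mat :: "real^'k^'k \<Rightarrow> bool" where
  "pos_def_mat S \<longleftrightarrow> (\<forall>x. x \<noteq> 0 \<longrightarrow> x \<bullet> (S *v x) > 0)"

definition spec_norm :: "real^'a^'b \<Rightarrow> real" where
  "spec_norm B = onorm (\<lambda>x. B *v x)"

definition real_eigenvalues :: "real^'k^'k \<Rightarrow> real set" where
  "real_eigenvalues S = {c. \<exists>v. v \<noteq> 0 \<and> S *v v = c *s v}"

definition lambda_min :: "real^'k^'k \<Rightarrow> real" where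
  "lambda_min S = Min (real_eigenvalues S)"

definition cmat :: "real^'k^'k \<Rightarrow> complex^'k^'k" where
  "cmat M = (\<chi> i j. complex_of_real (M $ i $ j))"

definition complex_eigenvalues :: "real^'k^'k \<Rightarrow> complex set" where
  "complex_eigenvalues M = {c. \<exists>v. v \<noteq> 0 \<and> cmat M *v v = c *s v}"

definition spectral_radius :: "real^'k^'k \<Rightarrow> real" where
  "spectral_radius M = Max (cmod ` complex_eigenvalues M)"

definition block_M :: "real \<Rightarrow> real^'m^'m \<Rightarrow> real^'m^'n \<Rightarrow> real^'n^'n \<Rightarrow> real^('n + 'm)^('n + 'm)" where
  "block_M r A B C = (\<chi> i j. (case (i, j) of
      (Inl a, Inl b) \<Rightarrow> - (C $ a $ b)
    | (Inl a, Inr b) \<Rightarrow> - (B $ a $ b)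
    | (Inr a, Inl b) \<Rightarrow> r * (B $ b $ a)
    | (Inr a, Inr b) \<Rightarrow> - r * (A $ a $ b)))"

end

theory Submission
  imports Defs "HOL-Computational_Algebra.Fundamental_Theorem_Algebra"
begin

(*
  Both iteration matrices are polynomials in M, so their eigenvalues are 1 + \<eta>\<lambda> and
  1 + \<eta>\<lambda> + (\<eta>\<lambda>)\<^sup>2 for eigenvalues \<lambda> = a + i b of M, with \<eta> = 1/(4rL).  Splitting an
  eigenvector into blocks (u, v) and pairing the two block equations with u and v gives:
  for real \<lambda>, -rL \<le> a \<le> -\<mu>x, the upper bound by evaluating the Schur complement form
  at u, because B\<^sup>T u = (a/r) v + A v; for non-real \<lambda>, the imaginary parts force
  |v|\<^sup>2 = r |u|\<^sup>2, whence 2a|u|\<^sup>2 = -(u\<^sup>*Cu + v\<^sup>*Av) \<le> (L - \<mu>r)|u|\<^sup>2 and, by Cauchy-Schwarz,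
  |\<lambda>|\<^sup>2 \<le> 2L\<^sup>2 r.  In both cases z = \<eta>\<lambda> satisfies -1/4 \<le> Re z, |z|\<^sup>2 \<le> -Re z and
  Re z \<le> -2\<delta> with \<delta> = \<mu>x/(64rL), and these three inequalities already give
  |1 + z| \<le> 1 - \<delta> and |1 + z + z\<^sup>2| \<le> 1 - \<delta>.
*)

lemma poly_det: "poly (det (Q :: 'a::comm_ring_1 poly^'k^'k)) c = det (\<chi> i j. poly (Q$i$j) c)"
  unfolding det_def by (simp add: poly_sum poly_prod)

definition charpoly :: "'a::comm_ring_1^'k^'k \<Rightarrow> 'a poly" where
  "charpoly Z = det (\<chi> i j. [: - (Z$i$j), of_bool (i = j) :])"

lemma poly_charpoly: "poly (charpoly Z) c = det (mat c - Z)"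
  unfolding charpoly_def poly_det by (rule arg_cong[where f = det]) (simp add: vec_eq_iff mat_def)

lemma det_eq_0_iff_kernel: "det (D :: 'a::field^'n^'n) = 0 \<longleftrightarrow> (\<exists>x. x \<noteq> 0 \<and> D *v x = 0)"
  by (metis invertible_det_nz invertible_left_inverse matrix_left_invertible_ker)

lemma mat_mult_vector: "mat c *v x = c *s (x :: 'a::semiring_1^'n)"
  by (simp add: vec_eq_iff matrix_vector_mult_def mat_def if_distrib[of "\<lambda>x. x * _"] cong: if_cong)

lemma charpoly_root_iff_eigenvalue:
  "poly (charpoly Z) c = 0 \<longleftrightarrow> (\<exists>v. v \<noteq> 0 \<and> (Z :: 'a::field^'k^'k) *v v = c *s v)"
  by (simp add: poly_charpoly det_eq_0_iff_kernel matrix_vector_mult_diff_rdistrib mat_mult_vector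
      eq_commute[of "Z *v _"])

lemma coeff_charpoly_card: "coeff (charpoly (Z :: 'a::idom^'k^'k)) CARD('k) = 1"
proof -
  define Q where "Q = (\<chi> i j. [: - (Z$i$j), of_bool (i = j) :])"
  have degree_Q: "degree (Q$i$j) \<le> of_bool (i = j)" for i j
    by (simp add: Q_def)
  have "coeff (\<Prod>i\<in>UNIV. Q $ i $ p i) CARD('k) = 0" if p: "p \<noteq> id" for p :: "'k \<Rightarrow> 'k"
  proof -
    obtain i0 where i0: "p i0 \<noteq> i0" using p by (auto simp: fun_eq_iff)
    have "degree (\<Prod>i\<in>UNIV. Q $ i $ p i) \<le> (\<Sum>i\<in>UNIV. degree (Q $ i $ p i))"
      using degree_prod_sum_le[of UNIV "\<lambda>i. Q $ i $ p i"] by (simp add: o_def)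
    also have "\<dots> = (\<Sum>i\<in>UNIV - {i0}. degree (Q $ i $ p i))"
      using degree_Q[of i0 "p i0"] i0 sum.remove[of UNIV i0 "\<lambda>i. degree (Q $ i $ p i)"] by simp
    also have "\<dots> \<le> (\<Sum>i\<in>UNIV - {i0}. 1)"
      by (rule sum_mono) (metis degree_Q of_bool_eq(1,2) le_SucI le_zero_eq One_nat_def)
    also have "\<dots> < CARD('k)" by simp
    finally show ?thesis by (simp add: coeff_eq_0)
  qed
  then have "coeff (charpoly Z) CARD('k) = coeff (\<Prod>i\<in>UNIV. Q $ i $ i) CARD('k)"
    unfolding charpoly_def Q_def[symmetric] det_def coeff_sum
    by (subst sum.remove[of _ id]) (auto simp: permutes_id finite_permutations sign_id of_int_poly)
  also have "\<dots> = 1"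
  proof -
    have "degree (\<Prod>i\<in>UNIV. Q $ i $ i) = CARD('k)"
      by (subst degree_prod_eq_sum_degree) (auto simp: Q_def)
    moreover have "lead_coeff (\<Prod>i\<in>UNIV. Q $ i $ i) = 1"
      by (simp add: lead_coeff_prod Q_def)
    ultimately show ?thesis by simp
  qed
  finally show ?thesis .
qed

lemma degree_charpoly_pos: "0 < degree (charpoly (Z :: 'a::idom^'k^'k))"
proof -
  have "CARD('k) \<le> degree (charpoly Z)" by (rule le_degree) (simp add: coeff_charpoly_card)
  then show ?thesis using zero_less_card_finite[where 'a = 'k] by linarith
qed

lemma complex_eigenvalues_charpoly: "complex_eigenvalues N = {c. poly (charpoly (cmat N)) c = 0}"
  unfolding complex_eigenvalues_def charpoly_root_iff_eigenvalue ..

lemma finite_complex_eigenvalues: "finite (complex_eigenvalues N)"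
  unfolding complex_eigenvalues_charpoly
  by (rule poly_roots_finite) (metis degree_0 degree_charpoly_pos less_irrefl)

lemma complex_eigenvalues_nonempty: "complex_eigenvalues N \<noteq> {}"
proof -
  have "\<not> constant (poly (charpoly (cmat N)))"
    using degree_charpoly_pos by (simp add: constant_degree)
  then show ?thesis
    unfolding complex_eigenvalues_charpoly using fundamental_theorem_of_algebra by blast
qed

lemma spectral_radius_le:
  assumes "\<And>c. c \<in> complex_eigenvalues N \<Longrightarrow> cmod c \<le> x"
  shows "spectral_radius N \<le> x"
  unfolding spectral_radius_def
  using assms finite_complex_eigenvalues[of N] complex_eigenvalues_nonempty[of N]
  by (simp add: Max_le_iff)

lemma cmat_mult_vector_simps:
  fixes X Y :: "real^'k^'k" and w :: "complex^'k"
  shows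
  "cmat (X + Y) *v w = cmat X *v w + cmat Y *v w"
  "cmat (k *\<^sub>R X) *v w = of_real k *s (cmat X *v w)"
  "cmat (mat 1) *v w = w"
  "cmat (X ** Y) *v w = cmat X *v (cmat Y *v w)"
proof -
  show "cmat (X + Y) *v w = cmat X *v w + cmat Y *v w"
    by (simp add: cmat_def matrix_vector_mult_def vec_eq_iff distrib_right sum.distrib)
  show "cmat (k *\<^sub>R X) *v w = of_real k *s (cmat X *v w)"
    by (simp add: cmat_def matrix_vector_mult_def vec_eq_iff sum_distrib_left mult.assoc)
  have "cmat (mat 1 :: real^'k^'k) = mat 1"
    by (simp add: cmat_def mat_def vec_eq_iff)
  then show "cmat (mat 1) *v w = w" by simp
  have "cmat (X ** Y) = cmat X ** cmat Y"
    by (simp add: vec_eq_iff cmat_def matrix_matrix_mult_def)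
  then show "cmat (X ** Y) *v w = cmat X *v (cmat Y *v w)"
    by (simp add: matrix_vector_mul_assoc)
qed

lemma matrix_vector_mult_smult: "(Z :: 'a::comm_ring_1^'k^'k) *v (c *s x) = c *s (Z *v x)"
  by (simp add: vec_eq_iff matrix_vector_mult_def sum_distrib_left algebra_simps)

lemma complex_eigenvalues_affine_image:
  assumes "c \<in> complex_eigenvalues (mat 1 + \<eta> *\<^sub>R N)" and "\<eta> \<noteq> 0"
  obtains l where "l \<in> complex_eigenvalues N" and "c = 1 + of_real \<eta> * l"
proof -
  obtain w where "w \<noteq> 0" and "cmat (mat 1 + \<eta> *\<^sub>R N) *v w = c *s w"
    using assms(1) unfolding complex_eigenvalues_def by blast
  then have "w + of_real \<eta> *s (cmat N *v w) = c *s w"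
    by (simp add: cmat_mult_vector_simps)
  then have "cmat N *v w = ((c - 1) / of_real \<eta>) *s w"
    using assms(2) by (simp add: vec_eq_iff field_simps)
  with \<open>w \<noteq> 0\<close> have "(c - 1) / of_real \<eta> \<in> complex_eigenvalues N"
    unfolding complex_eigenvalues_def by blast
  moreover have "c = 1 + of_real \<eta> * ((c - 1) / of_real \<eta>)"
    using assms(2) by simp
  ultimately show thesis by (rule that)
qed

lemma eigenvalue_of_quadratic_annihilator:
  fixes Z :: "'a::field^'k^'k"
  assumes "w \<noteq> 0" and "Z *v (Z *v w) - (\<alpha> + \<beta>) *s (Z *v w) + (\<alpha> * \<beta>) *s w = 0"
  shows "(\<exists>v. v \<noteq> 0 \<and> Z *v v = \<alpha> *s v) \<or> (\<exists>v. v \<noteq> 0 \<and> Z *v v = \<beta> *s v)"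
proof (cases "Z *v w = \<beta> *s w")
  case True
  then show ?thesis using assms(1) by blast
next
  case False
  define x where "x = Z *v w - \<beta> *s w"
  have "Z *v x - \<alpha> *s x = Z *v (Z *v w) - (\<alpha> + \<beta>) *s (Z *v w) + (\<alpha> * \<beta>) *s w"
    by (simp add: x_def matrix_vector_mult_diff_distrib matrix_vector_mult_smult vec_eq_iff
        algebra_simps)
  then have "Z *v x = \<alpha> *s x" using assms(2) by simp
  moreover have "x \<noteq> 0" using False by (simp add: x_def)
  ultimately show ?thesis by blast
qed

lemma complex_eigenvalues_quadratic_image:
  assumes "c \<in> complex_eigenvalues (mat 1 + \<eta> *\<^sub>R N + \<eta>\<^sup>2 *\<^sub>R (N ** N))" and "\<eta> \<noteq> 0"
  obtains l where "l \<in> complex_eigenvalues N" and "c = 1 + of_real \<eta> * l + (of_real \<eta> * l)\<^sup>2"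
proof -
  define e :: complex where "e = of_real \<eta>"
  have "e \<noteq> 0" using assms(2) by (simp add: e_def)
  obtain w where "w \<noteq> 0" and "cmat (mat 1 + \<eta> *\<^sub>R N + \<eta>\<^sup>2 *\<^sub>R (N ** N)) *v w = c *s w"
    using assms(1) unfolding complex_eigenvalues_def by blast
  then have eigen: "w + e *s (cmat N *v w) + e\<^sup>2 *s (cmat N *v (cmat N *v w)) = c *s w"
    by (simp add: cmat_mult_vector_simps e_def)
  \<comment> \<open>\<alpha> and \<beta> are the two roots of 1 + e x + (e x)^2 = c\<close>
  have "\<not> constant (poly [:(1 - c) / e\<^sup>2, 1 / e, 1:])"
    by (simp add: constant_degree)
  then obtain \<alpha> where \<alpha>: "poly [:(1 - c) / e\<^sup>2, 1 / e, 1:] \<alpha> = 0"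
    using fundamental_theorem_of_algebra by blast
  define \<beta> where "\<beta> = - 1 / e - \<alpha>"
  have sum: "\<alpha> + \<beta> = - 1 / e" and prod: "\<alpha> * \<beta> = (1 - c) / e\<^sup>2"
    using \<alpha> \<open>e \<noteq> 0\<close> by (auto simp: \<beta>_def field_simps power2_eq_square)
  have "cmat N *v (cmat N *v w) - (\<alpha> + \<beta>) *s (cmat N *v w) + (\<alpha> * \<beta>) *s w = 0"
    using eigen \<open>e \<noteq> 0\<close> unfolding sum prod by (simp add: vec_eq_iff field_simps power2_eq_square)
  then have "(\<exists>v. v \<noteq> 0 \<and> cmat N *v v = \<alpha> *s v) \<or> (\<exists>v. v \<noteq> 0 \<and> cmat N *v v = \<beta> *s v)"
    by (rule eigenvalue_of_quadratic_annihilator[OF \<open>w \<noteq> 0\<close>])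
  moreover have "c = 1 + e * x + (e * x)\<^sup>2" if "x = \<alpha> \<or> x = \<beta>" for x
  proof -
    have "x\<^sup>2 - (\<alpha> + \<beta>) * x + \<alpha> * \<beta> = 0"
      using that by (auto simp: power2_eq_square algebra_simps)
    moreover have "(e * x)\<^sup>2 + e * x + (1 - c) = e\<^sup>2 * (x\<^sup>2 - (\<alpha> + \<beta>) * x + \<alpha> * \<beta>)"
      using \<open>e \<noteq> 0\<close> unfolding sum prod by (simp add: field_simps power2_eq_square)
    ultimately show ?thesis by (simp add: algebra_simps)
  qed
  ultimately show thesis
    using that unfolding complex_eigenvalues_def e_def by blast
qed

definition vec_Re :: "complex^'k \<Rightarrow> real^'k" where
  "vec_Re w = (\<chi> i. Re (w$i))"

definition vec_Im :: "complex^'k \<Rightarrow> real^'k" where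
  "vec_Im w = (\<chi> i. Im (w$i))"

lemma complex_eigenvector_Re_Im:
  assumes "cmat N *v w = l *s w"
  shows "N *v vec_Re w = Re l *\<^sub>R vec_Re w - Im l *\<^sub>R vec_Im w"
    and "N *v vec_Im w = Im l *\<^sub>R vec_Re w + Re l *\<^sub>R vec_Im w"
proof -
  have "vec_Re (cmat N *v w) = N *v vec_Re w" "vec_Im (cmat N *v w) = N *v vec_Im w"
    by (simp_all add: vec_eq_iff vec_Re_def vec_Im_def cmat_def Re_sum Im_sum
        matrix_vector_mult_def)
  moreover have "vec_Re (l *s w) = Re l *\<^sub>R vec_Re w - Im l *\<^sub>R vec_Im w"
    and "vec_Im (l *s w) = Im l *\<^sub>R vec_Re w + Re l *\<^sub>R vec_Im w"
    by (simp_all add: vec_eq_iff vec_Re_def vec_Im_def add.commute)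
  ultimately show "N *v vec_Re w = Re l *\<^sub>R vec_Re w - Im l *\<^sub>R vec_Im w"
    and "N *v vec_Im w = Im l *\<^sub>R vec_Re w + Re l *\<^sub>R vec_Im w"
    using assms by simp_all
qed

lemma vec_Re_Im_eq_0_iff: "vec_Re w = 0 \<and> vec_Im w = 0 \<longleftrightarrow> w = 0"
  by (auto simp: vec_eq_iff vec_Re_def vec_Im_def complex_eq_iff)

lemma of_real_mem_complex_eigenvalues:
  assumes "c \<in> real_eigenvalues S"
  shows "complex_of_real c \<in> complex_eigenvalues S"
proof -
  obtain v where "v \<noteq> 0" and "S *v v = c *s v"
    using assms unfolding real_eigenvalues_def by blast
  moreover define w where "w = (\<chi> i. complex_of_real (v$i))"
  ultimately have "w \<noteq> 0" and "cmat S *v w = complex_of_real c *s w"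
    by (auto simp: vec_eq_iff w_def cmat_def matrix_vector_mult_def
        simp flip: of_real_mult of_real_sum)
  then show ?thesis unfolding complex_eigenvalues_def by blast
qed

lemma finite_real_eigenvalues: "finite (real_eigenvalues S)"
proof (rule finite_subset)
  show "real_eigenvalues S \<subseteq> Re ` complex_eigenvalues S"
    using of_real_mem_complex_eigenvalues by force
qed (simp add: finite_complex_eigenvalues)

lemma inner_matrix_vector_transpose:
  fixes A :: "real^'n^'m"
  shows "x \<bullet> (A *v y) = (transpose A *v x) \<bullet> y"
  by (simp add: dot_lmul_matrix)

lemma symmetric_matrix_inner_commute:
  fixes A :: "real^'n^'n"
  shows "transpose A = A \<Longrightarrow> x \<bullet> (A *v y) = y \<bullet> (A *v x)"
  by (metis inner_matrix_vector_transpose inner_commute)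

lemma symmetric_matrix_form_minimizer_eigenvector:
  fixes S :: "real^'k^'k"
  assumes "transpose S = S"
    and lower: "\<And>y. l * (y \<bullet> y) \<le> y \<bullet> (S *v y)"
    and "x \<bullet> (S *v x) = l * (x \<bullet> x)"
  shows "S *v x = l *\<^sub>R x"
proof -
  define g where "g = S *v x - l *\<^sub>R x"
  define q where "q = g \<bullet> (S *v g) - l * (g \<bullet> g)"
  have "q \<ge> 0" using lower[of g] by (simp add: q_def)
  \<comment> \<open>the nonnegative form vanishes at x, but has slope 2 g\<bullet>g there in direction g\<close>
  have line: "(x + s *\<^sub>R g) \<bullet> (S *v (x + s *\<^sub>R g)) - l * ((x + s *\<^sub>R g) \<bullet> (x + s *\<^sub>R g))
      = s * (2 * (g \<bullet> g) + s * q)" for s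
  proof -
    have "x \<bullet> (S *v g) = g \<bullet> (S *v x)"
      using assms(1) by (rule symmetric_matrix_inner_commute)
    then have "(x + s *\<^sub>R g) \<bullet> (S *v (x + s *\<^sub>R g))
        = x \<bullet> (S *v x) + 2 * s * (g \<bullet> (S *v x)) + s\<^sup>2 * (g \<bullet> (S *v g))"
      by (simp add: matrix_vector_right_distrib matrix_vector_mult_scaleR inner_add_left
          inner_add_right power2_eq_square algebra_simps)
    moreover have "(x + s *\<^sub>R g) \<bullet> (x + s *\<^sub>R g) = x \<bullet> x + 2 * s * (x \<bullet> g) + s\<^sup>2 * (g \<bullet> g)"
      by (simp add: inner_add_left inner_add_right inner_commute power2_eq_square algebra_simps)
    moreover have "g \<bullet> (S *v x) = g \<bullet> g + l * (x \<bullet> g)"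
      by (simp add: g_def inner_diff_right inner_commute algebra_simps)
    ultimately show ?thesis
      using assms(3) by (simp add: q_def power2_eq_square inner_commute[of g x] algebra_simps)
  qed
  have "g \<bullet> g = 0"
  proof (rule ccontr)
    assume "g \<bullet> g \<noteq> 0"
    then have "g \<bullet> g > 0" by (simp add: order_le_neq_trans)
    define s where "s = - (g \<bullet> g) / (q + 1)"
    have "s < 0" using \<open>g \<bullet> g > 0\<close> \<open>q \<ge> 0\<close> by (simp add: s_def divide_neg_pos)
    moreover have "0 < 2 * (g \<bullet> g) + s * q"
    proof -
      have "(g \<bullet> g) * (q / (q + 1)) \<le> g \<bullet> g"
        by (rule mult_left_le) (use \<open>q \<ge> 0\<close> in simp_all)
      moreover have "s * q = - ((g \<bullet> g) * (q / (q + 1)))" by (simp add: s_def)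
      ultimately show ?thesis using \<open>g \<bullet> g > 0\<close> by linarith
    qed
    ultimately have "s * (2 * (g \<bullet> g) + s * q) < 0" by (rule mult_neg_pos)
    with line[of s] lower[of "x + s *\<^sub>R g"] show False by linarith
  qed
  then show ?thesis by (simp add: g_def)
qed

lemma symmetric_matrix_Rayleigh_eigenvalue:
  fixes S :: "real^'k^'k"
  assumes "transpose S = S"
  obtains l where "l \<in> real_eigenvalues S" and "\<And>y. l * (y \<bullet> y) \<le> y \<bullet> (S *v y)"
proof -
  define f where "f y = y \<bullet> (S *v y)" for y :: "real^'k"
  have "continuous_on (sphere 0 1) f"
    unfolding f_def
    by (intro continuous_intros linear_continuous_on) (simp add: bounded_linear_inner_left)
  moreover have "sphere (0::real^'k) 1 \<noteq> {}"
    using vector_choose_size[of 1] by auto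
  ultimately obtain x where x: "x \<in> sphere 0 1"
    and min: "\<And>y. y \<in> sphere 0 1 \<Longrightarrow> f x \<le> f y"
    using continuous_attains_inf[OF compact_sphere] by blast
  have "x \<bullet> x = 1" using x by (simp add: dot_square_norm)
  have lower: "f x * (y \<bullet> y) \<le> f y" for y
  proof (cases "y = 0")
    case False
    have "f x \<le> f ((1 / norm y) *\<^sub>R y)" using False by (intro min) simp
    also have "\<dots> = f y / (norm y)\<^sup>2"
      by (simp add: f_def matrix_vector_mult_scaleR power2_eq_square)
    finally show ?thesis using False by (simp add: dot_square_norm field_simps)
  qed (simp add: f_def)
  have "S *v x = f x *\<^sub>R x"
    using assms lower \<open>x \<bullet> x = 1\<close>
    by (intro symmetric_matrix_form_minimizer_eigenvector) (simp_all add: f_def)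
  moreover have "x \<noteq> 0" using \<open>x \<bullet> x = 1\<close> by auto
  ultimately have "f x \<in> real_eigenvalues S"
    unfolding real_eigenvalues_def scalar_mult_eq_scaleR by blast
  with lower show thesis by (intro that[of "f x"]) (simp_all add: f_def)
qed

definition vec_inl :: "'a^('n::finite + 'm::finite) \<Rightarrow> 'a^'n" where
  "vec_inl w = (\<chi> i. w $ Inl i)"

definition vec_inr :: "'a^('n::finite + 'm::finite) \<Rightarrow> 'a^'m" where
  "vec_inr w = (\<chi> i. w $ Inr i)"

lemma vec_inl_inr_linear [simp]:
  "vec_inl (x + y) = vec_inl x + vec_inl y" "vec_inl (x - y) = vec_inl x - vec_inl y"
  "vec_inl (c *\<^sub>R x) = c *\<^sub>R vec_inl x"
  "vec_inr (x + y) = vec_inr x + vec_inr y" "vec_inr (x - y) = vec_inr x - vec_inr y"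
  "vec_inr (c *\<^sub>R x) = c *\<^sub>R vec_inr x"
  by (simp_all add: vec_eq_iff vec_inl_def vec_inr_def)

lemma sum_UNIV_Plus:
  fixes f :: "'n::finite + 'm::finite \<Rightarrow> 'a::comm_monoid_add"
  shows "(\<Sum>i\<in>UNIV. f i) = (\<Sum>i\<in>UNIV. f (Inl i)) + (\<Sum>i\<in>UNIV. f (Inr i))"
  by (simp add: UNIV_Plus_UNIV[symmetric] sum.Plus o_def del: UNIV_Plus_UNIV)

lemma inner_vec_Plus:
  fixes w w' :: "real^('n::finite + 'm::finite)"
  shows "w \<bullet> w' = vec_inl w \<bullet> vec_inl w' + vec_inr w \<bullet> vec_inr w'"
  by (simp add: inner_vec_def vec_inl_def vec_inr_def sum_UNIV_Plus)

lemma vec_inl_inr_eq_0_iff: "vec_inl w = 0 \<and> vec_inr w = 0 \<longleftrightarrow> w = 0"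
  by (auto simp: vec_eq_iff vec_inl_def vec_inr_def) (metis sum.exhaust)

lemma vec_inl_block_M:
  "vec_inl (block_M r A B C *v w) = - (C *v vec_inl w) - B *v vec_inr w"
  by (simp add: vec_eq_iff vec_inl_def vec_inr_def block_M_def matrix_vector_mult_def sum_UNIV_Plus
      sum_negf algebra_simps)

lemma vec_inr_block_M:
  "vec_inr (block_M r A B C *v w) = r *\<^sub>R (transpose B *v vec_inl w) - r *\<^sub>R (A *v vec_inr w)"
  by (simp add: vec_eq_iff vec_inl_def vec_inr_def block_M_def matrix_vector_mult_def sum_UNIV_Plus
      transpose_def sum_distrib_left sum_negf algebra_simps)

lemma inner_block_M:
  "vec_inl x \<bullet> vec_inl (block_M r A B C *v y)
    = - (vec_inl x \<bullet> (C *v vec_inl y)) - vec_inl x \<bullet> (B *v vec_inr y)"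
  "vec_inr x \<bullet> vec_inr (block_M r A B C *v y)
    = r * (vec_inl y \<bullet> (B *v vec_inr x)) - r * (vec_inr x \<bullet> (A *v vec_inr y))"
proof -
  show "vec_inl x \<bullet> vec_inl (block_M r A B C *v y)
    = - (vec_inl x \<bullet> (C *v vec_inl y)) - vec_inl x \<bullet> (B *v vec_inr y)"
    by (simp add: vec_inl_block_M inner_diff_right)
  have "vec_inr x \<bullet> (transpose B *v vec_inl y) = vec_inl y \<bullet> (B *v vec_inr x)"
    by (simp only: inner_matrix_vector_transpose[of "vec_inl y"] inner_commute)
  then show "vec_inr x \<bullet> vec_inr (block_M r A B C *v y)
    = r * (vec_inl y \<bullet> (B *v vec_inr x)) - r * (vec_inr x \<bullet> (A *v vec_inr y))"
    by (simp add: vec_inr_block_M inner_diff_right)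
qed

lemma inner_pair_Cauchy_Schwarz:
  fixes u1 u2 p1 p2 :: "'a::real_inner"
  shows "(u1 \<bullet> p1 + u2 \<bullet> p2)\<^sup>2 + (u1 \<bullet> p2 - u2 \<bullet> p1)\<^sup>2
    \<le> (u1 \<bullet> u1 + u2 \<bullet> u2) * (p1 \<bullet> p1 + p2 \<bullet> p2)"
proof -
  define \<alpha> where "\<alpha> = u1 \<bullet> p1 + u2 \<bullet> p2"
  define \<beta> where "\<beta> = u1 \<bullet> p2 - u2 \<bullet> p1"
  define N where "N = \<alpha>\<^sup>2 + \<beta>\<^sup>2"
  \<comment> \<open>Cauchy-Schwarz in the product space, against the rotation of (p1, p2) by (\<alpha>, \<beta>)\<close>
  define y where "y = (\<alpha> *\<^sub>R p1 + \<beta> *\<^sub>R p2, \<alpha> *\<^sub>R p2 - \<beta> *\<^sub>R p1)"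
  have "(u1, u2) \<bullet> y = N"
    by (simp add: y_def N_def inner_add_right inner_diff_right \<alpha>_def \<beta>_def power2_eq_square
        algebra_simps)
  moreover have "y \<bullet> y = N * (p1 \<bullet> p1 + p2 \<bullet> p2)"
    by (simp add: y_def N_def inner_add_right inner_diff_right inner_add_left inner_diff_left
        inner_commute power2_eq_square algebra_simps)
  ultimately have "N * N \<le> N * ((u1 \<bullet> u1 + u2 \<bullet> u2) * (p1 \<bullet> p1 + p2 \<bullet> p2))"
    using Cauchy_Schwarz_ineq[of "(u1, u2)" y] by (simp add: power2_eq_square algebra_simps)
  moreover have "0 \<le> N" by (simp add: N_def)
  ultimately have "N \<le> (u1 \<bullet> u1 + u2 \<bullet> u2) * (p1 \<bullet> p1 + p2 \<bullet> p2)"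
    by (cases "N = 0") (simp_all add: mult_le_cancel_left_pos)
  then show ?thesis by (simp add: N_def \<alpha>_def \<beta>_def)
qed

lemma norm_matrix_vector_le_spec_norm: "norm (K *v x) \<le> spec_norm K * norm x"
  unfolding spec_norm_def using onorm[OF matrix_vector_mul_bounded_linear[of K]] by simp

lemma matrix_inv_mult:
  assumes "invertible A"
  shows "A ** matrix_inv A = mat 1" and "matrix_inv A ** A = mat 1"
  using someI_ex[OF assms[unfolded invertible_def]] unfolding matrix_inv_def by auto

lemma symmetric_matrix_inv:
  fixes A :: "real^'n^'n"
  assumes "transpose A = A" and "invertible A"
  shows "transpose (matrix_inv A) = matrix_inv A"
proof -
  have "transpose (matrix_inv A) ** A = mat 1"
    using arg_cong[OF matrix_inv_mult(1)[OF assms(2)], of transpose]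
    by (simp add: matrix_transpose_mul assms(1))
  then have "transpose (matrix_inv A) = transpose (matrix_inv A) ** (A ** matrix_inv A)"
    by (simp add: matrix_inv_mult[OF assms(2)])
  also have "\<dots> = matrix_inv A"
    by (simp add: matrix_mul_assoc \<open>transpose (matrix_inv A) ** A = mat 1\<close>)
  finally show ?thesis .
qed

lemma Schur_complement_form:
  fixes A :: "real^'m^'m" and B :: "real^'m^'n" and C :: "real^'n^'n"
  assumes "transpose A = A" and "invertible A" and Bu: "transpose B *v u = s *\<^sub>R v + A *v v"
  shows "u \<bullet> ((C + B ** matrix_inv A ** transpose B) *v u)
    = u \<bullet> (C *v u) + u \<bullet> (B *v v) + s * (v \<bullet> v) + s\<^sup>2 * (v \<bullet> (matrix_inv A *v v))"
proof -
  have inv: "A *v (matrix_inv A *v x) = x" "matrix_inv A *v (A *v x) = x" for x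
    by (simp_all add: matrix_vector_mul_assoc matrix_inv_mult[OF assms(2)])
  have "u \<bullet> ((C + B ** matrix_inv A ** transpose B) *v u)
      = u \<bullet> (C *v u) + (transpose B *v u) \<bullet> (matrix_inv A *v (transpose B *v u))"
    by (simp only: matrix_vector_mult_add_rdistrib matrix_vector_mul_assoc[symmetric]
        inner_add_right inner_matrix_vector_transpose)
  also have "matrix_inv A *v (transpose B *v u) = s *\<^sub>R (matrix_inv A *v v) + v"
    by (simp only: Bu matrix_vector_right_distrib matrix_vector_mult_scaleR inv(2))
  also have "(A *v v) \<bullet> (matrix_inv A *v v) = v \<bullet> v"
    using symmetric_matrix_inner_commute[OF assms(1), of "matrix_inv A *v v" v]
    by (simp add: inner_commute inv(1))
  then have "(transpose B *v u) \<bullet> (s *\<^sub>R (matrix_inv A *v v) + v)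
      = s * (v \<bullet> v) + s\<^sup>2 * (v \<bullet> (matrix_inv A *v v)) + (transpose B *v u) \<bullet> v"
    unfolding Bu
    by (simp add: inner_add_left inner_add_right inner_commute power2_eq_square algebra_simps)
  also have "(transpose B *v u) \<bullet> v = u \<bullet> (B *v v)"
    by (simp add: inner_matrix_vector_transpose)
  finally show ?thesis by simp
qed

lemma cmod_step_polynomials_le:
  fixes z :: complex and d :: real
  assumes "- 1/4 \<le> Re z" and "(cmod z)\<^sup>2 \<le> - Re z" and "Re z \<le> - 2 * d"
  shows "cmod (1 + z) \<le> 1 - d" and "cmod (1 + z + z\<^sup>2) \<le> 1 - d"
proof -
  define x where "x = Re z"
  define S where "S = (cmod z)\<^sup>2"
  have S: "S = x\<^sup>2 + (Im z)\<^sup>2" by (simp add: S_def x_def cmod_power2)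
  have "0 \<le> S" by (simp add: S_def)
  have x: "- 1/4 \<le> x" "S \<le> - x" "x \<le> - 2 * d"
    using assms by (simp_all add: x_def S_def)
  have "(cmod (1 + z))\<^sup>2 = 1 + 2 * x + S"
    unfolding cmod_power2 by (simp add: S x_def power2_eq_square algebra_simps)
  then have "(cmod (1 + z))\<^sup>2 \<le> 1 + x" using x by linarith
  moreover have "(cmod (1 + z + z\<^sup>2))\<^sup>2 \<le> 1 + x"
  proof -
    have "(cmod (1 + z + z\<^sup>2))\<^sup>2 = 1 + 2 * x + 3 * x\<^sup>2 - (Im z)\<^sup>2 + S * (S + 2 * x)"
      unfolding cmod_power2 by (simp add: S x_def power2_eq_square algebra_simps)
    moreover have "S * (S + 2 * x) \<le> 0"
      using \<open>0 \<le> S\<close> x by (intro mult_nonneg_nonpos) simp_all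
    moreover have "x * x \<le> x * (- 1/4)"
      using \<open>0 \<le> S\<close> x by (intro mult_left_mono_neg) simp_all
    ultimately show ?thesis
      using x \<open>0 \<le> S\<close> zero_le_power2[of "Im z"] unfolding power2_eq_square by linarith
  qed
  moreover have "(1 - d)\<^sup>2 = 1 - 2 * d + d\<^sup>2"
    by (simp add: power2_eq_square algebra_simps)
  then have "1 + x \<le> (1 - d)\<^sup>2" and "0 \<le> 1 - d"
    using x \<open>0 \<le> S\<close> zero_le_power2[of d] by linarith+
  ultimately show "cmod (1 + z) \<le> 1 - d" and "cmod (1 + z + z\<^sup>2) \<le> 1 - d"
    by (meson order.trans power2_le_imp_le)+
qed

locale block_matrix_bounds =
  fixes A :: "real^'m^'m" and B :: "real^'m^'n" and C :: "real^'n^'n" and L \<mu> r :: real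
  assumes mu_pos: "0 < \<mu>" and mu_le_L: "\<mu> \<le> L"
    and A_symmetric: "transpose A = A" and C_symmetric: "transpose C = C"
    and A_lower: "loewner_le (\<mu> *\<^sub>R mat 1) A" and A_upper: "loewner_le A (L *\<^sub>R mat 1)"
    and B_norm: "spec_norm B \<le> L" and C_norm: "spec_norm C \<le> L"
    and Schur_pos_def: "pos_def_mat (C + B ** matrix_inv A ** transpose B)"
    and r_ge: "r \<ge> 2 * (L / \<mu>)"
begin

abbreviation M where "M \<equiv> block_M r A B C"

abbreviation Schur where "Schur \<equiv> C + B ** matrix_inv A ** transpose B"

definition \<mu>x where "\<mu>x = min L (lambda_min Schur)"

lemma L_pos: "0 < L"
  using mu_pos mu_le_L by linarith

lemma mu_r_ge: "2 * L \<le> \<mu> * r"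
  using r_ge mu_pos by (simp add: field_simps)

lemma r_ge_2: "2 \<le> r"
proof -
  have "\<mu> * 2 \<le> \<mu> * r" using mu_r_ge mu_le_L by linarith
  then show ?thesis using mu_pos by simp
qed

lemma r_pos: "0 < r"
  using r_ge_2 by linarith

lemma A_form_bounds: "\<mu> * (x \<bullet> x) \<le> x \<bullet> (A *v x)" "x \<bullet> (A *v x) \<le> L * (x \<bullet> x)"
  using A_lower A_upper unfolding loewner_le_def
  by (auto simp: scaleR_matrix_vector_assoc[symmetric])

lemma C_form_bound: "\<bar>x \<bullet> (C *v x)\<bar> \<le> L * (x \<bullet> x)"
proof -
  have "\<bar>x \<bullet> (C *v x)\<bar> \<le> norm x * norm (C *v x)" by (rule Cauchy_Schwarz_ineq2)
  also have "\<dots> \<le> norm x * (L * norm x)"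
    using norm_matrix_vector_le_spec_norm[of C x] mult_right_mono[OF C_norm norm_ge_zero[of x]]
    by (intro mult_left_mono) simp_all
  finally show ?thesis by (simp add: dot_square_norm power2_eq_square ac_simps)
qed

lemma B_image_bound: "(B *v x) \<bullet> (B *v x) \<le> L\<^sup>2 * (x \<bullet> x)"
proof -
  have "norm (B *v x) \<le> L * norm x"
    using norm_matrix_vector_le_spec_norm[of B x] mult_right_mono[OF B_norm norm_ge_zero[of x]]
    by simp
  then have "(norm (B *v x))\<^sup>2 \<le> (L * norm x)\<^sup>2" by (intro power_mono) auto
  then show ?thesis by (simp add: dot_square_norm power_mult_distrib)
qed

lemma A_invertible: "invertible A"
  unfolding invertible_left_inverse matrix_left_invertible_ker
proof (intro allI impI)
  fix x assume "A *v x = 0"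
  then have "\<mu> * (x \<bullet> x) \<le> 0" using A_form_bounds(1)[of x] by simp
  then have "x \<bullet> x \<le> 0" using mu_pos by (simp add: mult_le_0_iff)
  then show "x = 0" by (metis inner_eq_zero_iff inner_ge_zero order_antisym)
qed

lemma A_inv_form_bound: "\<mu> * (v \<bullet> (matrix_inv A *v v)) \<le> v \<bullet> v"
proof -
  define x where "x = matrix_inv A *v v"
  have v: "v = A *v x"
    by (simp add: x_def matrix_vector_mul_assoc matrix_inv_mult[OF A_invertible])
  have xv: "x \<bullet> v \<le> norm x * norm v" by (rule norm_cauchy_schwarz)
  have "\<mu> * norm x \<le> norm v"
  proof (cases "x = 0")
    case False
    have "\<mu> * (norm x * norm x) \<le> norm x * norm v"
      using A_form_bounds(1)[of x] xv unfolding v[symmetric] dot_square_norm power2_eq_square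
      by linarith
    then have "norm x * (\<mu> * norm x) \<le> norm x * norm v" by (simp add: ac_simps)
    then show ?thesis using False by (simp add: mult_left_le_imp_le)
  qed simp
  have "\<mu> * (x \<bullet> v) \<le> \<mu> * (norm x * norm v)"
    using xv mu_pos by simp
  also have "\<dots> \<le> norm v * norm v"
    using mult_right_mono[OF \<open>\<mu> * norm x \<le> norm v\<close> norm_ge_zero[of v]] by (simp add: mult.assoc)
  finally show ?thesis by (simp add: x_def inner_commute dot_square_norm power2_eq_square)
qed

lemma Schur_symmetric: "transpose Schur = Schur"
proof -
  have "transpose (X + Y) = transpose X + transpose Y" for X Y :: "real^'n^'n"
    by (simp add: vec_eq_iff transpose_def)
  then show ?thesis
    by (simp add: matrix_transpose_mul C_symmetric matrix_mul_assoc
        symmetric_matrix_inv[OF A_symmetric A_invertible])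
qed

lemma mux_pos: "0 < \<mu>x" and mux_le_L: "\<mu>x \<le> L"
  and Schur_form_lower: "\<mu>x * (y \<bullet> y) \<le> y \<bullet> (Schur *v y)"
proof -
  obtain l where l: "l \<in> real_eigenvalues Schur" and "\<And>y. l * (y \<bullet> y) \<le> y \<bullet> (Schur *v y)"
    using symmetric_matrix_Rayleigh_eigenvalue[OF Schur_symmetric] by blast
  have "0 < c" if c: "c \<in> real_eigenvalues Schur" for c
  proof -
    obtain v where "v \<noteq> 0" and "Schur *v v = c *s v"
      using c unfolding real_eigenvalues_def mem_Collect_eq by auto
    moreover have "0 < v \<bullet> (Schur *v v)"
      using Schur_pos_def \<open>v \<noteq> 0\<close> unfolding pos_def_mat_def by auto
    ultimately have "0 < c * (v \<bullet> v)" by (simp add: scalar_mult_eq_scaleR)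
    then show ?thesis using inner_ge_zero[of v] by (auto simp: zero_less_mult_iff)
  qed
  moreover have "real_eigenvalues Schur \<noteq> {}" using l by auto
  ultimately have "0 < lambda_min Schur"
    unfolding lambda_min_def by (simp add: Min_gr_iff finite_real_eigenvalues)
  then show "0 < \<mu>x" and "\<mu>x \<le> L" using L_pos by (simp_all add: \<mu>x_def)
  have "\<mu>x \<le> l"
    using Min_le[OF finite_real_eigenvalues l] by (simp add: \<mu>x_def lambda_min_def)
  then have "\<mu>x * (y \<bullet> y) \<le> l * (y \<bullet> y)" by (rule mult_right_mono) simp
  also have "\<dots> \<le> y \<bullet> (Schur *v y)" by fact
  finally show "\<mu>x * (y \<bullet> y) \<le> y \<bullet> (Schur *v y)" .
qed

lemma mux_le_mu_r: "\<mu>x \<le> \<mu> * r"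
  using mux_le_L mu_r_ge L_pos by linarith

lemma real_eigenvector_blocks:
  assumes "M *v w = a *\<^sub>R w"
  shows "- (C *v vec_inl w) - B *v vec_inr w = a *\<^sub>R vec_inl w"
    and "transpose B *v vec_inl w = (a / r) *\<^sub>R vec_inr w + A *v vec_inr w"
proof -
  show "- (C *v vec_inl w) - B *v vec_inr w = a *\<^sub>R vec_inl w"
    using arg_cong[OF assms, of vec_inl] by (simp add: vec_inl_block_M)
  have "r *\<^sub>R (transpose B *v vec_inl w) = a *\<^sub>R vec_inr w + r *\<^sub>R (A *v vec_inr w)"
    using arg_cong[OF assms, of vec_inr] by (simp add: vec_inr_block_M algebra_simps)
  then have "(1 / r) *\<^sub>R (r *\<^sub>R (transpose B *v vec_inl w))
      = (1 / r) *\<^sub>R (a *\<^sub>R vec_inr w + r *\<^sub>R (A *v vec_inr w))"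
    by simp
  then show "transpose B *v vec_inl w = (a / r) *\<^sub>R vec_inr w + A *v vec_inr w"
    using r_pos by (simp add: scaleR_add_right)
qed

lemma real_eigenvector_forms:
  assumes "M *v w = a *\<^sub>R w"
  defines "u \<equiv> vec_inl w" and "v \<equiv> vec_inr w"
  shows "- (u \<bullet> (C *v u)) - u \<bullet> (B *v v) = a * (u \<bullet> u)"
    and "u \<bullet> (B *v v) = (a / r) * (v \<bullet> v) + v \<bullet> (A *v v)"
proof -
  show "- (u \<bullet> (C *v u)) - u \<bullet> (B *v v) = a * (u \<bullet> u)"
    using arg_cong[OF real_eigenvector_blocks(1)[OF assms(1)], of "inner u"]
    by (simp add: u_def v_def inner_diff_right)
  have "u \<bullet> (B *v v) = (transpose B *v u) \<bullet> v"
    by (rule inner_matrix_vector_transpose)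
  also have "\<dots> = ((a / r) *\<^sub>R v + A *v v) \<bullet> v"
    unfolding u_def v_def using real_eigenvector_blocks(2)[OF assms(1)] by (rule arg_cong)
  also have "\<dots> = (a / r) * (v \<bullet> v) + v \<bullet> (A *v v)"
    by (simp add: inner_add_left inner_commute[of "A *v v"])
  finally show "u \<bullet> (B *v v) = (a / r) * (v \<bullet> v) + v \<bullet> (A *v v)" .
qed

lemma real_eigenvalue_lower_bound:
  assumes "M *v w = a *\<^sub>R w" and "w \<noteq> 0"
  shows "- (r * L) \<le> a"
proof -
  define u v where "u = vec_inl w" and "v = vec_inr w"
  define U V P Q where "U = u \<bullet> u" and "V = v \<bullet> v"
    and "P = u \<bullet> (C *v u)" and "Q = v \<bullet> (A *v v)"
  have "a * (r * U + V) = - (r * (P + Q))"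
    using real_eigenvector_forms[OF assms(1)] r_pos
    by (simp add: u_def v_def U_def V_def P_def Q_def field_simps)
  moreover have "r * (P + Q) \<le> r * L * (r * U + V)"
  proof -
    have "P \<le> L * U" "Q \<le> L * V"
      using C_form_bound[of u] A_form_bounds(2)[of v] by (simp_all add: U_def V_def P_def Q_def)
    moreover have "U \<le> r * U"
      using mult_right_mono[OF _ inner_ge_zero[of u], of 1 r] r_ge_2 by (simp add: U_def)
    then have "L * U \<le> L * (r * U)"
      using L_pos by simp
    ultimately have "P + Q \<le> L * (r * U + V)" by (simp add: algebra_simps)
    then show ?thesis using mult_left_mono[of _ _ r] r_pos by (simp add: mult.assoc)
  qed
  moreover have "0 < r * U + V"
  proof -
    have "0 < U + V"
      using assms(2) by (simp add: U_def V_def u_def v_def inner_vec_Plus[symmetric])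
    moreover have "U \<le> r * U"
      using mult_right_mono[OF _ inner_ge_zero[of u], of 1 r] r_ge_2 by (simp add: U_def)
    ultimately show ?thesis by linarith
  qed
  ultimately have "(- (r * L)) * (r * U + V) \<le> a * (r * U + V)"
    by (simp only: mult_minus_left mult.assoc)
  then show ?thesis using \<open>0 < r * U + V\<close> by (rule mult_right_le_imp_le)
qed

lemma real_eigenvector_Schur_bound:
  assumes "M *v w = a *\<^sub>R w"
  defines "u \<equiv> vec_inl w" and "v \<equiv> vec_inr w"
  shows "\<mu>x * (u \<bullet> u)
    \<le> - a * (u \<bullet> u) + (a / r) * (v \<bullet> v) + (a / r)\<^sup>2 * (v \<bullet> (matrix_inv A *v v))"
proof -
  have "\<mu>x * (u \<bullet> u) \<le> u \<bullet> (Schur *v u)"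
    by (rule Schur_form_lower)
  also have "\<dots> = u \<bullet> (C *v u) + u \<bullet> (B *v v)
      + (a / r) * (v \<bullet> v) + (a / r)\<^sup>2 * (v \<bullet> (matrix_inv A *v v))"
    using A_symmetric A_invertible real_eigenvector_blocks(2)[OF assms(1)] unfolding u_def v_def
    by (rule Schur_complement_form)
  also have "u \<bullet> (C *v u) + u \<bullet> (B *v v) = - a * (u \<bullet> u)"
    using real_eigenvector_forms(1)[OF assms(1)] by (simp add: u_def v_def)
  finally show ?thesis .
qed

lemma real_eigenvalue_negative:
  assumes "M *v w = a *\<^sub>R w" and "vec_inl w \<noteq> 0"
  shows "a < 0"
proof (rule ccontr)
  assume "\<not> a < 0"
  define u v s where "u = vec_inl w" and "v = vec_inr w" and "s = a / r"
  define U V Q t where "U = u \<bullet> u" and "V = v \<bullet> v" and "Q = v \<bullet> (A *v v)"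
    and "t = v \<bullet> (matrix_inv A *v v)"
  have "0 \<le> s" using \<open>\<not> a < 0\<close> r_pos by (simp add: s_def)
  have "0 < U" using assms(2) by (simp add: U_def u_def)
  have "\<mu> * (s * V + s\<^sup>2 * t) \<le> s * (s * V + Q)"
  proof -
    have "\<mu> * (s * V) \<le> s * Q"
      using mult_left_mono[OF A_form_bounds(1)[of v] \<open>0 \<le> s\<close>] by (simp add: V_def Q_def ac_simps)
    moreover have "\<mu> * (s\<^sup>2 * t) \<le> s\<^sup>2 * V"
      using mult_left_mono[OF A_inv_form_bound[of v] zero_le_power2[of s]]
      by (simp add: V_def t_def ac_simps)
    ultimately show ?thesis by (simp add: algebra_simps power2_eq_square)
  qed
  also have "\<dots> \<le> s * (L * U)"
  proof (rule mult_left_mono[OF _ \<open>0 \<le> s\<close>])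
    have "s * V + Q = - (u \<bullet> (C *v u)) - a * U"
      using real_eigenvector_forms[OF assms(1)] by (simp add: u_def v_def s_def U_def V_def Q_def)
    moreover have "0 \<le> a * U" using \<open>\<not> a < 0\<close> \<open>0 < U\<close> by simp
    ultimately show "s * V + Q \<le> L * U"
      using C_form_bound[of u] unfolding U_def by linarith
  qed
  also have "\<dots> \<le> \<mu> * (a * U / 2)"
  proof -
    have "a * (2 * L) \<le> a * (\<mu> * r)" using mu_r_ge \<open>\<not> a < 0\<close> by (simp add: mult_left_mono)
    then have "s * L \<le> \<mu> * a / 2" using r_pos by (simp add: s_def field_simps)
    from mult_right_mono[OF this less_imp_le[OF \<open>0 < U\<close>]] show ?thesis by (simp add: ac_simps)
  qed
  finally have "s * V + s\<^sup>2 * t \<le> a * U / 2" using mu_pos by simp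
  then have "\<mu>x * U \<le> - a * U / 2"
    using real_eigenvector_Schur_bound[OF assms(1), folded u_def v_def,
        folded s_def U_def V_def t_def]
    by linarith
  moreover have "0 < \<mu>x * U" using mux_pos \<open>0 < U\<close> by simp
  moreover have "0 \<le> a * U" using \<open>\<not> a < 0\<close> \<open>0 < U\<close> by simp
  ultimately show False by linarith
qed

lemma real_eigenvalue_upper_bound:
  assumes "M *v w = a *\<^sub>R w" and "w \<noteq> 0"
  shows "a \<le> - \<mu>x"
proof -
  define u v s where "u = vec_inl w" and "v = vec_inr w" and "s = a / r"
  define U V Q t where "U = u \<bullet> u" and "V = v \<bullet> v" and "Q = v \<bullet> (A *v v)"
    and "t = v \<bullet> (matrix_inv A *v v)"
  have a: "a = s * r" using r_pos by (simp add: s_def)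
  have "\<mu> * V \<le> Q" using A_form_bounds(1)[of v] by (simp add: V_def Q_def)
  consider (far) "s \<le> - \<mu>" | (top_zero) "- \<mu> < s" "u = 0" | (top_nonzero) "- \<mu> < s" "u \<noteq> 0"
    by linarith
  then show ?thesis
  proof cases
    case far
    then have "a \<le> - \<mu> * r" unfolding a using mult_right_mono[of s "- \<mu>" r] r_pos by simp
    then show ?thesis using mux_le_mu_r by linarith
  next
    case top_zero
    then have "s * V + Q = 0"
      using real_eigenvector_forms(2)[OF assms(1)] by (simp add: u_def v_def s_def V_def Q_def)
    with \<open>\<mu> * V \<le> Q\<close> have "(s + \<mu>) * V \<le> 0"
      unfolding distrib_right by linarith
    moreover have "0 < V"
      using top_zero assms(2) vec_inl_inr_eq_0_iff[of w] by (simp add: V_def u_def v_def)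
    ultimately show ?thesis using top_zero by (simp add: mult_le_0_iff)
  next
    case top_nonzero
    then have "0 < U" by (simp add: U_def)
    have "a < 0" using real_eigenvalue_negative[OF assms(1)] top_nonzero by (simp add: u_def)
    then have "s < 0" using r_pos by (simp add: s_def divide_neg_pos)
    have "\<mu> * (s * V + s\<^sup>2 * t) \<le> s * V * (\<mu> + s)"
      using mult_left_mono[OF A_inv_form_bound[of v] zero_le_power2[of s]]
      by (simp add: V_def t_def algebra_simps power2_eq_square)
    also have "\<dots> \<le> 0"
      using \<open>s < 0\<close> top_nonzero
      by (intro mult_nonpos_nonneg) (simp_all add: V_def mult_nonpos_nonneg)
    finally have "s * V + s\<^sup>2 * t \<le> 0" using mu_pos by (simp add: mult_le_0_iff)
    then have "\<mu>x * U \<le> (- a) * U"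
      using real_eigenvector_Schur_bound[OF assms(1), folded u_def v_def,
          folded s_def U_def V_def t_def]
      by linarith
    then have "\<mu>x \<le> - a" using \<open>0 < U\<close> by (rule mult_right_le_imp_le)
    then show ?thesis by linarith
  qed
qed

lemma nonreal_eigenvector_forms:
  assumes ev1: "M *v w1 = a *\<^sub>R w1 - b *\<^sub>R w2" and ev2: "M *v w2 = b *\<^sub>R w1 + a *\<^sub>R w2"
  defines "u1 \<equiv> vec_inl w1" and "u2 \<equiv> vec_inl w2" and "v1 \<equiv> vec_inr w1" and "v2 \<equiv> vec_inr w2"
  defines "U \<equiv> u1 \<bullet> u1 + u2 \<bullet> u2" and "V \<equiv> v1 \<bullet> v1 + v2 \<bullet> v2"
    and "P \<equiv> u1 \<bullet> (C *v u1) + u2 \<bullet> (C *v u2)" and "Q \<equiv> v1 \<bullet> (A *v v1) + v2 \<bullet> (A *v v2)"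
    and "X \<equiv> u1 \<bullet> (B *v v1) + u2 \<bullet> (B *v v2)" and "Y \<equiv> u1 \<bullet> (B *v v2) - u2 \<bullet> (B *v v1)"
  shows "- P - X = a * U" and "- Y = b * U" and "r * X - r * Q = a * V" and "r * Y = - b * V"
proof -
  \<comment> \<open>real and imaginary parts of the Hermitian forms of the two block rows of
    M w = (a + i b) w at w = w1 + i w2\<close>
  have top: "vec_inl x \<bullet> (a *\<^sub>R u1 - b *\<^sub>R u2) = - (vec_inl x \<bullet> (C *v u1)) - vec_inl x \<bullet> (B *v v1)"
    "vec_inl x \<bullet> (b *\<^sub>R u1 + a *\<^sub>R u2) = - (vec_inl x \<bullet> (C *v u2)) - vec_inl x \<bullet> (B *v v2)"
    for x :: "real^('n + 'm)"
    using inner_block_M(1)[of x r A B C w1] inner_block_M(1)[of x r A B C w2]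
    by (simp_all add: ev1 ev2 u1_def u2_def v1_def v2_def)
  have bot:
    "vec_inr x \<bullet> (a *\<^sub>R v1 - b *\<^sub>R v2) = r * (u1 \<bullet> (B *v vec_inr x)) - r * (vec_inr x \<bullet> (A *v v1))"
    "vec_inr x \<bullet> (b *\<^sub>R v1 + a *\<^sub>R v2) = r * (u2 \<bullet> (B *v vec_inr x)) - r * (vec_inr x \<bullet> (A *v v2))"
    for x :: "real^('n + 'm)"
    using inner_block_M(2)[of x r A B C w1] inner_block_M(2)[of x r A B C w2]
    by (simp_all add: ev1 ev2 u1_def u2_def v1_def v2_def)
  have "u1 \<bullet> (C *v u2) = u2 \<bullet> (C *v u1)" and "v1 \<bullet> (A *v v2) = v2 \<bullet> (A *v v1)"
    using C_symmetric A_symmetric by (simp_all add: symmetric_matrix_inner_commute)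
  moreover note top[of w1, folded u1_def] top[of w2, folded u2_def]
    bot[of w1, folded v1_def] bot[of w2, folded v2_def]
  ultimately show "- P - X = a * U" and "- Y = b * U"
    and "r * X - r * Q = a * V" and "r * Y = - b * V"
    unfolding U_def V_def P_def Q_def X_def Y_def
    by (simp_all add: inner_diff_right inner_add_right inner_commute algebra_simps)
qed

lemma nonreal_eigenvector_balance:
  assumes ev1: "M *v w1 = a *\<^sub>R w1 - b *\<^sub>R w2" and ev2: "M *v w2 = b *\<^sub>R w1 + a *\<^sub>R w2"
    and "b \<noteq> 0" and "w1 \<noteq> 0 \<or> w2 \<noteq> 0"
  defines "u1 \<equiv> vec_inl w1" and "u2 \<equiv> vec_inl w2" and "v1 \<equiv> vec_inr w1" and "v2 \<equiv> vec_inr w2"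
  defines "U \<equiv> u1 \<bullet> u1 + u2 \<bullet> u2" and "V \<equiv> v1 \<bullet> v1 + v2 \<bullet> v2"
    and "P \<equiv> u1 \<bullet> (C *v u1) + u2 \<bullet> (C *v u2)" and "Q \<equiv> v1 \<bullet> (A *v v1) + v2 \<bullet> (A *v v2)"
  shows "V = r * U" and "0 < U" and "2 * a * U = - P - Q"
proof -
  define X Y where "X = u1 \<bullet> (B *v v1) + u2 \<bullet> (B *v v2)"
    and "Y = u1 \<bullet> (B *v v2) - u2 \<bullet> (B *v v1)"
  note forms = nonreal_eigenvector_forms[OF ev1 ev2,
      folded u1_def u2_def v1_def v2_def, folded U_def V_def P_def Q_def X_def Y_def]
  have "b * V = - (r * Y)" using forms(4) by simp
  also have "\<dots> = r * (b * U)" using forms(2) by (simp flip: mult_minus_right)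
  finally have "b * V = b * (r * U)" by (simp add: ac_simps)
  then show V: "V = r * U" using \<open>b \<noteq> 0\<close> by simp
  have "U + V = w1 \<bullet> w1 + w2 \<bullet> w2"
    by (simp add: U_def V_def u1_def u2_def v1_def v2_def inner_vec_Plus)
  moreover have "0 < w1 \<bullet> w1 + w2 \<bullet> w2"
    using assms(4) by (auto intro: add_pos_nonneg add_nonneg_pos)
  ultimately have "0 < (1 + r) * U" by (simp add: V algebra_simps)
  then show "0 < U" using r_pos by (simp add: zero_less_mult_iff)
  have "r * (X - Q) = r * (a * U)" using forms(3) by (simp add: V algebra_simps)
  then have "X - Q = a * U" using r_pos by simp
  then show "2 * a * U = - P - Q" using forms(1) by simp
qed

lemma nonreal_eigenvalue_Re_bound:
  assumes ev1: "M *v w1 = a *\<^sub>R w1 - b *\<^sub>R w2" and ev2: "M *v w2 = b *\<^sub>R w1 + a *\<^sub>R w2"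
    and "b \<noteq> 0" and "w1 \<noteq> 0 \<or> w2 \<noteq> 0"
  shows "a \<le> - (\<mu> * r) / 4"
proof -
  define u1 u2 v1 v2 where "u1 = vec_inl w1" and "u2 = vec_inl w2" and "v1 = vec_inr w1"
    and "v2 = vec_inr w2"
  define U V P Q where "U = u1 \<bullet> u1 + u2 \<bullet> u2" and "V = v1 \<bullet> v1 + v2 \<bullet> v2"
    and "P = u1 \<bullet> (C *v u1) + u2 \<bullet> (C *v u2)" and "Q = v1 \<bullet> (A *v v1) + v2 \<bullet> (A *v v2)"
  note balance = nonreal_eigenvector_balance[OF assms,
      folded u1_def u2_def v1_def v2_def, folded U_def V_def P_def Q_def]
  have "- P \<le> L * U"
    using C_form_bound[of u1] C_form_bound[of u2] by (simp add: P_def U_def algebra_simps)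
  moreover have "\<mu> * V \<le> Q"
    using A_form_bounds(1)[of v1] A_form_bounds(1)[of v2] by (simp add: Q_def V_def algebra_simps)
  then have "\<mu> * r * U \<le> Q" by (simp add: balance(1) ac_simps)
  ultimately have "2 * a * U \<le> (L - \<mu> * r) * U"
    using balance(3) by (simp add: algebra_simps)
  then have "2 * a \<le> L - \<mu> * r" using balance(2) by (rule mult_right_le_imp_le)
  then show ?thesis using mu_r_ge by linarith
qed

lemma nonreal_eigenvalue_modulus_bound:
  assumes ev1: "M *v w1 = a *\<^sub>R w1 - b *\<^sub>R w2" and ev2: "M *v w2 = b *\<^sub>R w1 + a *\<^sub>R w2"
    and "b \<noteq> 0" and "w1 \<noteq> 0 \<or> w2 \<noteq> 0"
  shows "a\<^sup>2 + b\<^sup>2 \<le> 2 * L\<^sup>2 * r"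
proof -
  define u1 u2 v1 v2 where "u1 = vec_inl w1" and "u2 = vec_inl w2" and "v1 = vec_inr w1"
    and "v2 = vec_inr w2"
  define U V P Q X Y where "U = u1 \<bullet> u1 + u2 \<bullet> u2" and "V = v1 \<bullet> v1 + v2 \<bullet> v2"
    and "P = u1 \<bullet> (C *v u1) + u2 \<bullet> (C *v u2)" and "Q = v1 \<bullet> (A *v v1) + v2 \<bullet> (A *v v2)"
    and "X = u1 \<bullet> (B *v v1) + u2 \<bullet> (B *v v2)" and "Y = u1 \<bullet> (B *v v2) - u2 \<bullet> (B *v v1)"
  note forms = nonreal_eigenvector_forms[OF ev1 ev2,
      folded u1_def u2_def v1_def v2_def, folded U_def V_def P_def Q_def X_def Y_def]
  note balance = nonreal_eigenvector_balance[OF assms,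
      folded u1_def u2_def v1_def v2_def, folded U_def V_def P_def Q_def]
  have XY: "X\<^sup>2 + Y\<^sup>2 \<le> L\<^sup>2 * r * U\<^sup>2"
  proof -
    have "X\<^sup>2 + Y\<^sup>2 \<le> U * ((B *v v1) \<bullet> (B *v v1) + (B *v v2) \<bullet> (B *v v2))"
      unfolding X_def Y_def U_def by (rule inner_pair_Cauchy_Schwarz)
    also have "\<dots> \<le> U * (L\<^sup>2 * V)"
      using B_image_bound[of v1] B_image_bound[of v2] balance(2)
      by (intro mult_left_mono) (simp_all add: V_def algebra_simps)
    finally show ?thesis by (simp add: balance(1) power2_eq_square ac_simps)
  qed
  have aU: "a * U = - (P + Q) / 2" using balance(3) by (simp add: field_simps)
  have bU: "b * U = - Y" using forms(2) by linarith
  have "(a\<^sup>2 + b\<^sup>2) * U\<^sup>2 = (a * U)\<^sup>2 + (b * U)\<^sup>2"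
    by (simp add: power_mult_distrib algebra_simps)
  also have "\<dots> = (P + Q)\<^sup>2 / 4 + Y\<^sup>2"
    unfolding aU bU by (simp add: power_divide power2_eq_square algebra_simps)
  also have "\<dots> \<le> (P + Q)\<^sup>2 / 4 + L\<^sup>2 * r * U\<^sup>2 - X\<^sup>2"
    using XY by simp
  also have "X = (Q - P) / 2" using forms(1) balance(3) by simp
  also have "(P + Q)\<^sup>2 / 4 + L\<^sup>2 * r * U\<^sup>2 - ((Q - P) / 2)\<^sup>2 = P * Q + L\<^sup>2 * r * U\<^sup>2"
    by (simp add: power2_eq_square field_simps)
  also have "P * Q \<le> L * U * (L * V)"
  proof -
    have "0 \<le> \<mu> * V" using mu_pos by (simp add: V_def)
    then have "0 \<le> Q"
      using A_form_bounds(1)[of v1] A_form_bounds(1)[of v2] by (simp add: Q_def V_def algebra_simps)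
    then have "P * Q \<le> L * U * Q"
      using abs_le_D1[OF C_form_bound[of u1]] abs_le_D1[OF C_form_bound[of u2]]
      by (intro mult_right_mono) (simp_all add: P_def U_def algebra_simps)
    also have "\<dots> \<le> L * U * (L * V)"
      using A_form_bounds(2)[of v1] A_form_bounds(2)[of v2] L_pos balance(2)
      by (intro mult_left_mono) (simp_all add: Q_def V_def algebra_simps)
    finally show ?thesis .
  qed
  finally have "(a\<^sup>2 + b\<^sup>2) * U\<^sup>2 \<le> (2 * L\<^sup>2 * r) * U\<^sup>2"
    by (simp add: balance(1) power2_eq_square algebra_simps)
  then show ?thesis using balance(2) by simp
qed

lemma eigenvalue_region:
  assumes "l \<in> complex_eigenvalues M"
  shows "- (r * L) \<le> Re l" and "(cmod l)\<^sup>2 \<le> 4 * r * L * (- Re l)"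
    and "Re l \<le> - \<mu>x / 8"
proof -
  obtain w where "w \<noteq> 0" and w: "cmat M *v w = l *s w"
    using assms unfolding complex_eigenvalues_def by auto
  note ev = complex_eigenvector_Re_Im[OF w]
  have nz: "vec_Re w \<noteq> 0 \<or> vec_Im w \<noteq> 0"
    using \<open>w \<noteq> 0\<close> vec_Re_Im_eq_0_iff[of w] by blast
  have cmod: "(cmod l)\<^sup>2 = (Re l)\<^sup>2 + (Im l)\<^sup>2" by (simp add: cmod_power2)
  have "- (r * L) \<le> Re l \<and> (cmod l)\<^sup>2 \<le> 4 * r * L * (- Re l) \<and> Re l \<le> - \<mu>x / 8"
  proof (cases "Im l = 0")
    case True
    then obtain x where "M *v x = Re l *\<^sub>R x" and "x \<noteq> 0"
      using ev nz by auto
    then have lower: "- (r * L) \<le> Re l" and upper: "Re l \<le> - \<mu>x"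
      by (simp_all add: real_eigenvalue_lower_bound real_eigenvalue_upper_bound)
    have "(- Re l) * (- Re l) \<le> (4 * r * L) * (- Re l)"
      using lower upper mux_pos r_pos L_pos by (intro mult_right_mono) auto
    then show ?thesis using lower upper mux_pos True cmod by (simp add: power2_eq_square)
  next
    case False
    have upper: "Re l \<le> - (\<mu> * r) / 4"
      using nonreal_eigenvalue_Re_bound[OF ev False nz] .
    have modulus: "(cmod l)\<^sup>2 \<le> 2 * L\<^sup>2 * r"
      using nonreal_eigenvalue_modulus_bound[OF ev False nz] cmod by simp
    have "(Re l)\<^sup>2 \<le> (r * L)\<^sup>2"
    proof -
      have "(Re l)\<^sup>2 \<le> 2 * L\<^sup>2 * r" using modulus cmod zero_le_power2[of "Im l"] by linarith
      also have "\<dots> \<le> (r * L)\<^sup>2"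
        using r_ge_2 L_pos by (simp add: power2_eq_square mult_right_mono)
      finally show ?thesis .
    qed
    then have "- (r * L) \<le> Re l"
      using r_pos L_pos by (simp add: abs_le_square_iff[symmetric] abs_le_iff)
    moreover have "2 * L\<^sup>2 * r \<le> 4 * r * L * (\<mu> * r / 4)"
      using mu_r_ge r_pos L_pos by (simp add: power2_eq_square mult_left_mono)
    moreover have "\<dots> \<le> 4 * r * L * (- Re l)"
      using upper r_pos L_pos by (intro mult_left_mono) auto
    ultimately show ?thesis using upper modulus mux_le_mu_r mux_pos by (intro conjI; linarith)
  qed
  then show "- (r * L) \<le> Re l" and "(cmod l)\<^sup>2 \<le> 4 * r * L * (- Re l)"
    and "Re l \<le> - \<mu>x / 8"
    by auto
qed

lemma eigenvalue_step_contract: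
  assumes "l \<in> complex_eigenvalues M"
  defines "z \<equiv> of_real (1 / (4 * r * L)) * l"
  shows "cmod (1 + z) \<le> 1 - \<mu>x / (64 * r * L)"
    and "cmod (1 + z + z\<^sup>2) \<le> 1 - \<mu>x / (64 * r * L)"
proof -
  define \<eta> where "\<eta> = 1 / (4 * r * L)"
  have "0 < \<eta>" using r_pos L_pos by (simp add: \<eta>_def)
  have Re: "Re z = \<eta> * Re l" by (simp add: z_def \<eta>_def)
  have "cmod z = \<eta> * cmod l"
    unfolding z_def \<eta>_def[symmetric] norm_mult using \<open>0 < \<eta>\<close> by simp
  then have cmod: "(cmod z)\<^sup>2 = \<eta>\<^sup>2 * (cmod l)\<^sup>2" by (simp add: power_mult_distrib)
  note region = eigenvalue_region[OF assms(1)]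
  have "- 1/4 \<le> Re z"
    using mult_left_mono[OF region(1) less_imp_le[OF \<open>0 < \<eta>\<close>]] r_pos L_pos
    by (simp add: Re \<eta>_def)
  moreover have "(cmod z)\<^sup>2 \<le> - Re z"
  proof -
    have "\<eta> * (cmod l)\<^sup>2 \<le> \<eta> * (4 * r * L * (- Re l))"
      using region(2) \<open>0 < \<eta>\<close> by (rule mult_left_mono[OF _ less_imp_le])
    also have "\<dots> = - Re l" using r_pos L_pos by (simp add: \<eta>_def)
    finally have "\<eta> * (\<eta> * (cmod l)\<^sup>2) \<le> \<eta> * (- Re l)"
      using \<open>0 < \<eta>\<close> by (rule mult_left_mono[OF _ less_imp_le])
    then show ?thesis unfolding cmod Re by (simp add: power2_eq_square ac_simps)
  qed
  moreover have "Re z \<le> - 2 * (\<mu>x / (64 * r * L))"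
    using mult_left_mono[OF region(3) less_imp_le[OF \<open>0 < \<eta>\<close>]] r_pos L_pos
    by (simp add: Re \<eta>_def ac_simps)
  ultimately show "cmod (1 + z) \<le> 1 - \<mu>x / (64 * r * L)"
    and "cmod (1 + z + z\<^sup>2) \<le> 1 - \<mu>x / (64 * r * L)"
    by (rule cmod_step_polynomials_le)+
qed

end

theorem lemma2:
  fixes A :: "real^'m^'m" and B :: "real^'m^'n" and C :: "real^'n^'n"
    and L \<mu> r :: real
  assumes "0 < \<mu>" and "\<mu> \<le> L"
    and "transpose A = A" and "transpose C = C"
    and "loewner_le (\<mu> *\<^sub>R mat 1) A" and "loewner_le A (L *\<^sub>R mat 1)"
    and "spec_norm B \<le> L" and "spec_norm C \<le> L"
    and "pos_def_mat (C + B ** matrix_inv A ** transpose B)"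
    and "r \<ge> 2 * (L / \<mu>)"
  shows "let \<mu>x = min L (lambda_min (C + B ** matrix_inv A ** transpose B));
             \<kappa>x = L / \<mu>x;
             \<eta>x = 1 / (4 * r * L);
             \<eta>y = 1 / (4 * L);
             M = block_M r A B C;
             I = (mat 1 :: real^('n + 'm)^('n + 'm));
             \<rho>1 = spectral_radius (I + \<eta>x *\<^sub>R M);
             \<rho>2 = spectral_radius (I + \<eta>x *\<^sub>R M + \<eta>x\<^sup>2 *\<^sub>R (M ** M))
         in max \<rho>1 \<rho>2 \<le> 1 - 1 / (64 * r * \<kappa>x)"
proof -
  interpret block_matrix_bounds A B C L \<mu> r
    by unfold_locales fact+
  define \<eta> where "\<eta> = 1 / (4 * r * L)"
  have "\<eta> \<noteq> 0" using r_pos L_pos by (simp add: \<eta>_def)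
  have "spectral_radius (mat 1 + \<eta> *\<^sub>R M) \<le> 1 - \<mu>x / (64 * r * L)"
    by (rule spectral_radius_le, erule complex_eigenvalues_affine_image[OF _ \<open>\<eta> \<noteq> 0\<close>])
      (simp only: \<eta>_def eigenvalue_step_contract(1))
  moreover have "spectral_radius (mat 1 + \<eta> *\<^sub>R M + \<eta>\<^sup>2 *\<^sub>R (M ** M)) \<le> 1 - \<mu>x / (64 * r * L)"
    by (rule spectral_radius_le, erule complex_eigenvalues_quadratic_image[OF _ \<open>\<eta> \<noteq> 0\<close>])
      (simp only: \<eta>_def eigenvalue_step_contract(2))
  moreover have "1 / (64 * r * (L / \<mu>x)) = \<mu>x / (64 * r * L)"
    using mux_pos L_pos by simp
  ultimately show ?thesis
    unfolding Let_def \<mu>x_def[symmetric] \<eta>_def[symmetric] by simp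
qed

end
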